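(* Let $k$ be a positive integer. For integers $0\le j\le k$ define the $q$-fibonomial coefficient $$\left\langle \begin{matrix} k \\ j \end{matrix} \right\rangle (x, s, q) = \frac{\prod_{i=1}^k f(i, x, s)}{\prod_{i=1}^j f(i, x, q^{j-i}s) \prod_{i=1}^{k-j} f(i, x, q^{j} s)}.$$ Then for all $n \in \mathbb{Z}$, $$\sum_{j=0}^{k+1} (-1)^{\binom{j+1}{2}} s^{\binom{j}{2}} q^{\frac{j(j-1)(2j-1)}{6}} \left\langle \begin{matrix} k+1 \\ j \end{matrix} \right\rangle (x, s, q)\, f(n-j, x, q^j s)^k = 0.$$
   Context: Let $x,s,q$ be indeterminates; all quantities live in the field of rational functions in $x,s,q$. The Carlitz $q$-Fibonacci polynomials $f(n,x,s)$ are defined by $f(0,x,s)=0$, $f(1,x,s)=1$ and $f(n, x, s) = x f(n-1, x, s) + q^{n-2} s f(n-2, x, s)$; this recurrence is required to hold for all $n\in\mathbb{Z}$, which uniquely extends $f(n,x,s)$ to negative $n$. Here $f(n,x,q^a s)$ means $f(n,x,s)$ with $s$ replaced by $q^a s$ (with the same $q$). *)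

theory Defs
  imports "HOL-Computational_Algebra.Polynomial" "HOL-Computational_Algebra.Fraction_Field"
begin

text \<open>Field of rational functions in x, s, q: the fraction field of Z[q][s][x],
  realised as int poly poly poly fract (outermost poly variable = q,
  middle = s, innermost = x).\<close>

type_synonym ratfun = "int poly poly poly fract"

definition Qv :: ratfun where "Qv = Fract [:0, 1:] 1"
definition Sv :: ratfun where "Sv = Fract [:[:0, 1:]:] 1"
definition Xv :: ratfun where "Xv = Fract [:[:[:0, 1:]:]:] 1"

fun cfib_nat :: "'a::field \<Rightarrow> 'a \<Rightarrow> 'a \<Rightarrow> nat \<Rightarrow> 'a" where
  "cfib_nat x s q 0 = 0"
| "cfib_nat x s q (Suc 0) = 1"
| "cfib_nat x s q (Suc (Suc m)) = x * cfib_nat x s q (Suc m) + q ^ m * s * cfib_nat x s q m"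

text \<open>Values at -m, obtained by running the recurrence
  f(n) = x f(n-1) + q^(n-2) s f(n-2) backwards:
  f(n-2) = (f(n) - x f(n-1)) / (q^(n-2) s).\<close>
fun cfib_neg :: "'a::field \<Rightarrow> 'a \<Rightarrow> 'a \<Rightarrow> nat \<Rightarrow> 'a" where
  "cfib_neg x s q 0 = 0"
| "cfib_neg x s q (Suc 0) = q / s"
| "cfib_neg x s q (Suc (Suc m)) = (cfib_neg x s q m - x * cfib_neg x s q (Suc m)) * q ^ (m + 2) / s"

definition cfib :: "int \<Rightarrow> 'a::field \<Rightarrow> 'a \<Rightarrow> 'a \<Rightarrow> 'a" where
  "cfib n x s q = (if 0 \<le> n then cfib_nat x s q (nat n) else cfib_neg x s q (nat (- n)))"

definition fibonomial :: "nat \<Rightarrow> nat \<Rightarrow> 'a::field \<Rightarrow> 'a \<Rightarrow> 'a \<Rightarrow> 'a" where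
  "fibonomial k j x s q =
     (\<Prod>i=1..k. cfib (int i) x s q) /
     ((\<Prod>i=1..j. cfib (int i) x (q ^ (j - i) * s) q) *
      (\<Prod>i=1..k - j. cfib (int i) x (q ^ j * s) q))"

end

theory Submission
  imports Defs
begin

text \<open>For each \<open>j\<close>, \<open>n \<mapsto> f(n - j, x, q\<^sup>j s)\<close> solves the same second-order recurrence as
  \<open>Y(n) = f(n, x, s)\<close> and \<open>X(n) = f(n - 1, x, q s)\<close>, so it is a combination of these two:
  \<open>W\<^sub>j f(n - j, x, q\<^sup>j s) = a\<^sub>j Y(n) - b\<^sub>j X(n)\<close>, with \<open>a\<^sub>j = f(j - 1, x, q s)\<close>, \<open>b\<^sub>j = f(j, x, s)\<close> and
  the Casoratian \<open>W\<^sub>j = (-1)\<^sup>j q\<^bsup>j(j-1)/2\<^esup> s\<^bsup>j-1\<^esup>\<close>. The \<open>k\<close>-th powers of the \<open>k + 2\<close> linear forms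
  \<open>a\<^sub>j Y - b\<^sub>j X\<close> satisfy the homogeneous Lagrange interpolation identity, whose denominators
  \<open>\<Prod>i\<noteq>j. (a\<^sub>j b\<^sub>i - b\<^sub>j a\<^sub>i) = \<Prod>i\<noteq>j. W\<^sub>j f(i - j, x, q\<^sup>j s)\<close> are, up to the sign and the powers of
  \<open>s\<close> and \<open>q\<close>, the denominators of the \<open>q\<close>-fibonomial coefficients.\<close>

lemma cfib_recurrence:
  fixes x s q :: "'a::field"
  assumes s: "s \<noteq> 0" and q: "q \<noteq> 0"
  shows "cfib n x s q = x * cfib (n - 1) x s q + q powi (n - 2) * s * cfib (n - 2) x s q"
proof (cases "n \<ge> 2")
  case True
  then obtain m where m: "n = int m + 2" by (metis add.commute le_add_diff_inverse nonneg_int_cases zle_diff1_eq diff_ge_0_iff_ge)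
  have "nat n = Suc (Suc m)" "nat (n - 1) = Suc m" "nat (n - 2) = m" using m by auto
  then show ?thesis using m by (simp add: cfib_def power_int_of_nat)
next
  case False
  show ?thesis
  proof (cases "n = 1")
    case True
    then show ?thesis using s q by (simp add: cfib_def power_int_minus field_simps)
  next
    case False
    with \<open>\<not> n \<ge> 2\<close> have "n \<le> 0" by auto
    then obtain m where m: "n = - int m" by (metis minus_minus neg_0_le_iff_le nonneg_int_cases)
    have e1: "cfib n x s q = cfib_neg x s q m" using m by (simp add: cfib_def)
    have e2: "cfib (n-1) x s q = cfib_neg x s q (Suc m)" using m by (simp add: cfib_def nat_add_distrib)
    have e3: "cfib (n-2) x s q = cfib_neg x s q (Suc (Suc m))" using m by (simp add: cfib_def nat_add_distrib)
    have pw: "q powi (n-2) * q ^ (m+2) = 1" using m q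
      by (simp add: power_int_minus power_int_of_nat[symmetric] power_int_add[symmetric])
    have "q powi (n-2) * s * ((cfib_neg x s q m - x * cfib_neg x s q (Suc m)) * q ^ (m + 2) / s)
        = (cfib_neg x s q m - x * cfib_neg x s q (Suc m)) * (q powi (n-2) * q ^ (m + 2))"
      using s by (simp add: field_simps)
    then show ?thesis unfolding e1 e2 e3 using pw by simp
  qed
qed

lemma recurrence_eq_0_from_consecutive_zeros:
  fixes y c :: "int \<Rightarrow> 'a::field"
  assumes r: "\<And>n. y n = x * y (n - 1) + c n * y (n - 2)" and c: "\<And>n. c n \<noteq> 0"
    and a0: "y a = 0" and a1: "y (a + 1) = 0"
  shows "y n = 0"
proof -
  have f: "y (a + int m) = 0 \<and> y (a + int m + 1) = 0" for m
  proof (induction m)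
    case 0 then show ?case using a0 a1 by simp
  next
    case (Suc m)
    have "y (a + int m + 2) = x * y (a + int m + 1) + c (a + int m + 2) * y (a + int m)"
      using r[of "a + int m + 2"] by (simp add: algebra_simps)
    with Suc show ?case by (simp add: algebra_simps)
  qed
  have b: "y (a - int m) = 0 \<and> y (a - int m + 1) = 0" for m
  proof (induction m)
    case 0 then show ?case using a0 a1 by simp
  next
    case (Suc m)
    have "y (a - int m + 1) = x * y (a - int m) + c (a - int m + 1) * y (a - int m - 1)"
      using r[of "a - int m + 1"] by (simp add: algebra_simps)
    then have "c (a - int m + 1) * y (a - int m - 1) = 0" using Suc.IH by simp
    with c have "y (a - int m - 1) = 0" by simp
    with Suc show ?case by (simp add: algebra_simps)
  qed
  show ?thesis
  proof (cases "n \<ge> a")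
    case True
    then have "n = a + int (nat (n - a))" by simp
    then show ?thesis using f by metis
  next
    case False
    then have "n = a - int (nat (a - n))" by simp
    then show ?thesis using b by metis
  qed
qed

lemma sum_cancel_factor_at_index:
  fixes c :: "'i \<Rightarrow> 'a::field"
  assumes "finite I" "m \<in> I" and "d m m = 0" and "\<And>j. j \<in> I - {m} \<Longrightarrow> d j m \<noteq> 0"
  shows "(\<Sum>j\<in>I. c j * d j m / (\<Prod>i\<in>I - {j}. d j i)) = (\<Sum>j\<in>I - {m}. c j / (\<Prod>i\<in>I - {m} - {j}. d j i))"
proof -
  have "(\<Sum>j\<in>I. c j * d j m / (\<Prod>i\<in>I - {j}. d j i)) = (\<Sum>j\<in>I - {m}. c j * d j m / (\<Prod>i\<in>I - {j}. d j i))"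
    using assms by (simp add: sum.remove)
  also have "\<dots> = (\<Sum>j\<in>I - {m}. c j / (\<Prod>i\<in>I - {m} - {j}. d j i))"
  proof (rule sum.cong)
    fix j assume j: "j \<in> I - {m}"
    then have "I - {j} = insert m (I - {m} - {j})" using assms by auto
    then have "(\<Prod>i\<in>I - {j}. d j i) = d j m * (\<Prod>i\<in>I - {m} - {j}. d j i)" using assms by simp
    then show "c j * d j m / (\<Prod>i\<in>I - {j}. d j i) = c j / (\<Prod>i\<in>I - {m} - {j}. d j i)"
      using assms j by simp
  qed simp
  finally show ?thesis .
qed

text \<open>Homogeneous form of the Lagrange interpolation identity
  \<open>\<Sum>j. p(t\<^sub>j) / \<Prod>i\<noteq>j. (t\<^sub>j - t\<^sub>i) = 0\<close> for \<open>deg p < card I - 1\<close>, with the points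
  \<open>t\<^sub>j = b\<^sub>j / a\<^sub>j\<close> and \<open>p(t) = (Y - t X)\<^sup>n\<close>.\<close>
lemma homogeneous_lagrange_sum_eq_0:
  fixes a b :: "'i \<Rightarrow> 'a::field"
  assumes "finite I" "card I = n + 2"
    and "\<And>i j. i \<in> I \<Longrightarrow> j \<in> I \<Longrightarrow> i \<noteq> j \<Longrightarrow> a j * b i - b j * a i \<noteq> 0"
  shows "(\<Sum>j\<in>I. (a j * Y - b j * X) ^ n / (\<Prod>i\<in>I - {j}. a j * b i - b j * a i)) = 0"
  using assms
proof (induction n arbitrary: I)
  case 0
  then obtain u v where I: "I = {u, v}" "u \<noteq> v" by (auto simp: card_Suc_eq numeral_2_eq_2)
  then have "I - {u} = {v}" "I - {v} = {u}" by auto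
  moreover have "a v * b u - b v * a u = - (a u * b v - b u * a v)" by simp
  ultimately show ?case using I by (simp del: minus_diff_eq)
next
  case (Suc n)
  define d where "d j i = a j * b i - b j * a i" for j i
  define L where "L j = a j * Y - b j * X" for j
  define P where "P j = (\<Prod>i\<in>I - {j}. d j i)" for j
  have d_nonzero: "d j i \<noteq> 0" if "i \<in> I" "j \<in> I" "i \<noteq> j" for i j
    using Suc.prems(3) that unfolding d_def by blast
  obtain u v where uv: "u \<in> I" "v \<in> I" "u \<noteq> v"
  proof -
    have "I \<noteq> {}" using Suc.prems(2) by auto
    then obtain u where u: "u \<in> I" by blast
    then have "card (I - {u}) = n + 2" using Suc.prems(1,2) by simp
    then have "I - {u} \<noteq> {}" by (metis card.empty add_2_eq_Suc' nat.distinct(1))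
    then show ?thesis using u that by blast
  qed
  have vanish: "(\<Sum>j\<in>I. L j ^ n * d j m / P j) = 0" if "m \<in> I" for m
  proof -
    have "(\<Sum>j\<in>I. L j ^ n * d j m / P j) = (\<Sum>j\<in>I - {m}. L j ^ n / (\<Prod>i\<in>I - {m} - {j}. d j i))"
      unfolding P_def using Suc.prems(1) that d_nonzero
      by (intro sum_cancel_factor_at_index) (auto simp: d_def)
    also have "\<dots> = 0"
      using Suc.IH[of "I - {m}"] Suc.prems that unfolding L_def d_def by simp
    finally show ?thesis .
  qed
  have plucker: "L j * d u v = L u * d j v - L v * d j u" for j
    unfolding L_def d_def by (simp add: algebra_simps)
  have "(\<Sum>j\<in>I. L j ^ Suc n / P j) * d u v
      = L u * (\<Sum>j\<in>I. L j ^ n * d j v / P j) - L v * (\<Sum>j\<in>I. L j ^ n * d j u / P j)"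
  proof -
    have "L j ^ Suc n / P j * d u v = L u * (L j ^ n * d j v / P j) - L v * (L j ^ n * d j u / P j)" for j
    proof -
      have "L j ^ Suc n / P j * d u v = (L j * d u v) * L j ^ n / P j" by (simp add: mult_ac)
      also have "\<dots> = (L u * d j v - L v * d j u) * L j ^ n / P j" by (simp only: plucker)
      also have "\<dots> = L u * (L j ^ n * d j v / P j) - L v * (L j ^ n * d j u / P j)"
        by (simp add: diff_divide_distrib algebra_simps)
      finally show ?thesis .
    qed
    then show ?thesis by (simp add: sum_distrib_left sum_distrib_right sum_subtractf)
  qed
  also have "\<dots> = 0" using vanish uv by simp
  finally show ?case using d_nonzero[of v u] uv unfolding L_def P_def d_def by simp
qed

lemma square_pyramidal_Suc:
  "Suc j * (Suc j - 1) * (2 * Suc j - 1) div 6 = j * (j - 1) * (2 * j - 1) div 6 + j\<^sup>2"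
proof -
  have "Suc j * j * (2 * Suc j - 1) = j * (j - 1) * (2 * j - 1) + 6 * j\<^sup>2"
    by (cases j) (simp_all add: algebra_simps power2_eq_square)
  then show ?thesis by simp
qed

context
  fixes x s q :: "'a::field"
  assumes s_nonzero: "s \<noteq> 0" and q_nonzero: "q \<noteq> 0"
begin

definition cfib_shift :: "nat \<Rightarrow> int \<Rightarrow> 'a" where
  "cfib_shift j n = cfib (n - int j) x (q ^ j * s) q"

lemma cfib_shift_recurrence:
  "cfib_shift j n = x * cfib_shift j (n - 1) + q powi (n - 2) * s * cfib_shift j (n - 2)"
proof -
  have "q powi (n - int j - 2) * q ^ j = q powi (n - 2)"
    using q_nonzero power_int_add[of q "n - int j - 2" "int j"] by (simp add: power_int_of_nat)
  moreover have "q ^ j * s \<noteq> 0" using s_nonzero q_nonzero by simp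
  ultimately show ?thesis
    unfolding cfib_shift_def using cfib_recurrence[of "q ^ j * s" q "n - int j" x] q_nonzero
    by (simp add: algebra_simps)
qed

lemma cfib_shift_self [simp]: "cfib_shift j (int j) = 0"
  and cfib_shift_Suc_self [simp]: "cfib_shift j (int j + 1) = 1"
  by (simp_all add: cfib_shift_def cfib_def)

definition casoratian :: "nat \<Rightarrow> 'a" where
  "casoratian j = cfib_shift 1 (int j) * cfib_shift 0 (int j + 1) - cfib_shift 0 (int j) * cfib_shift 1 (int j + 1)"

text \<open>Both sides solve the recurrence in \<open>n\<close> and agree at \<open>n = j\<close> and \<open>n = j + 1\<close>.\<close>
lemma casoratian_mult_cfib_shift:
  "casoratian j * cfib_shift j n = cfib_shift 1 (int j) * cfib_shift 0 n - cfib_shift 0 (int j) * cfib_shift 1 n"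
proof -
  define y where "y n = casoratian j * cfib_shift j n
    - (cfib_shift 1 (int j) * cfib_shift 0 n - cfib_shift 0 (int j) * cfib_shift 1 n)" for n
  have "y n = 0"
  proof (rule recurrence_eq_0_from_consecutive_zeros[where c = "\<lambda>n. q powi (n - 2) * s" and x = x and a = "int j"])
    fix n
    show "y n = x * y (n - 1) + q powi (n - 2) * s * y (n - 2)"
      unfolding y_def
      by (subst (1 2 3) cfib_shift_recurrence[of _ n]) (simp add: algebra_simps)
    show "q powi (n - 2) * s \<noteq> 0" using s_nonzero q_nonzero by simp
  qed (simp_all add: y_def casoratian_def)
  then show ?thesis unfolding y_def by simp
qed

lemma casoratian_0: "casoratian 0 = 1 / s"
  using s_nonzero q_nonzero by (simp add: casoratian_def cfib_shift_def cfib_def)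

lemma casoratian_Suc: "casoratian (Suc j) = - (q ^ j * s) * casoratian j"
proof -
  have "cfib_shift i (2 + int j) = x * cfib_shift i (1 + int j) + q ^ j * s * cfib_shift i (int j)" for i
    using cfib_shift_recurrence[of i "int j + 2"] by (simp add: power_int_of_nat add.commute)
  then show ?thesis unfolding casoratian_def by (simp add: algebra_simps add.assoc)
qed

lemma casoratian_nonzero: "casoratian j \<noteq> 0"
  by (induction j) (simp_all add: s_nonzero q_nonzero casoratian_0 casoratian_Suc)

lemma casoratian_cross_antisym:
  "casoratian j * cfib_shift j (int i) = - (casoratian i * cfib_shift i (int j))"
  by (simp add: casoratian_mult_cfib_shift)

lemma cfib_shift_of_nat: "i \<le> j \<Longrightarrow> cfib_shift i (int j) = cfib (int (j - i)) x (q ^ i * s) q"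
  by (simp add: cfib_shift_def of_nat_diff)

lemma prod_casoratian_cross_below:
  "(\<Prod>i<j. casoratian j * cfib_shift j (int i))
     = (-1) ^ j * (\<Prod>i<j. casoratian i) * (\<Prod>t=1..j. cfib (int t) x (q ^ (j - t) * s) q)"
proof -
  have "(\<Prod>i<j. cfib_shift i (int j)) = (\<Prod>t=1..j. cfib (int t) x (q ^ (j - t) * s) q)"
  proof (rule prod.reindex_bij_witness[of _ "\<lambda>t. j - t" "\<lambda>i. j - i"])
    fix i assume "i \<in> {..<j}"
    then show "j - (j - i) = i" "j - i \<in> {1..j}"
      and "cfib (int (j - i)) x (q ^ (j - (j - i)) * s) q = cfib_shift i (int j)"
      by (auto simp: cfib_shift_of_nat)
  qed auto
  moreover have "(\<Prod>i<j. casoratian j * cfib_shift j (int i)) = (\<Prod>i<j. - 1 * (casoratian i * cfib_shift i (int j)))"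
    by (intro prod.cong refl) (simp add: casoratian_cross_antisym[of j])
  moreover have "\<dots> = (- 1) ^ j * (\<Prod>i<j. casoratian i) * (\<Prod>i<j. cfib_shift i (int j))"
    by (simp only: prod.distrib prod_constant card_lessThan mult.assoc)
  ultimately show ?thesis by simp
qed

lemma prod_casoratian_cross_above:
  "(\<Prod>i\<in>{Suc j..m}. casoratian j * cfib_shift j (int i))
     = casoratian j ^ (m - j) * (\<Prod>t=1..m - j. cfib (int t) x (q ^ j * s) q)"
proof -
  have "(\<Prod>i\<in>{Suc j..m}. cfib_shift j (int i)) = (\<Prod>t=1..m - j. cfib (int t) x (q ^ j * s) q)"
  proof (rule prod.reindex_bij_witness[of _ "\<lambda>t. t + j" "\<lambda>i. i - j"])
    fix i assume "i \<in> {Suc j..m}"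
    then show "i - j + j = i" "i - j \<in> {1..m - j}"
      and "cfib (int (i - j)) x (q ^ j * s) q = cfib_shift j (int i)"
      by (auto simp: cfib_shift_of_nat)
  qed auto
  then show ?thesis by (simp add: prod.distrib)
qed

lemma casoratian_power:
  "(-1) ^ (((j + 1) choose 2) + j) * s ^ (j choose 2) * q ^ (j * (j - 1) * (2 * j - 1) div 6)
     * (\<Prod>i<j. casoratian i) * s * casoratian j = casoratian j ^ j"
proof (induction j)
  case 0
  then show ?case using s_nonzero by (simp add: casoratian_0 numeral_2_eq_2)
next
  case (Suc j)
  have choose_Suc: "Suc m choose 2 = (m choose 2) + m" for m
    by (simp add: numeral_2_eq_2)
  have "((Suc j + 1) choose 2) + Suc j = (((j + 1) choose 2) + j) + j + 2"
    using choose_Suc[of "Suc j"] choose_Suc[of j] by simp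
  then have sign: "(-1::'a) ^ (((Suc j + 1) choose 2) + Suc j) = (-1) ^ (((j + 1) choose 2) + j) * (-1) ^ j"
    by (simp add: power_add)
  have s_pow: "s ^ (Suc j choose 2) = s ^ (j choose 2) * s ^ j"
    by (simp add: choose_Suc power_add)
  have q_pow: "q ^ (Suc j * (Suc j - 1) * (2 * Suc j - 1) div 6) = q ^ (j * (j - 1) * (2 * j - 1) div 6) * (q ^ j) ^ j"
    by (simp only: square_pyramidal_Suc power_add power2_eq_square power_mult)
  have "(-1) ^ (((Suc j + 1) choose 2) + Suc j) * s ^ (Suc j choose 2) * q ^ (Suc j * (Suc j - 1) * (2 * Suc j - 1) div 6)
      * (\<Prod>i<Suc j. casoratian i) * s * casoratian (Suc j)
      = ((-1) ^ (((j + 1) choose 2) + j) * s ^ (j choose 2) * q ^ (j * (j - 1) * (2 * j - 1) div 6)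
          * (\<Prod>i<j. casoratian i) * s * casoratian j) * ((-1) ^ j * s ^ j * (q ^ j) ^ j) * casoratian (Suc j)"
    unfolding sign s_pow q_pow by (simp only: prod.lessThan_Suc mult_ac)
  also have "\<dots> = (- (q ^ j * s) * casoratian j) ^ j * casoratian (Suc j)"
    unfolding Suc.IH power_mult_distrib power_minus[of "q ^ j * s"] by (simp only: mult_ac)
  finally show ?case by (simp add: casoratian_Suc)
qed

context
  assumes cfib_nonzero: "\<And>i t. 1 \<le> t \<Longrightarrow> cfib_nat x (q ^ i * s) q t \<noteq> 0"
begin

lemma cfib_shift_nonzero: "i < j \<Longrightarrow> cfib_shift i (int j) \<noteq> 0"
  using cfib_nonzero[of "j - i" i] by (simp add: cfib_shift_of_nat cfib_def del: of_nat_diff)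

lemma casoratian_cross_nonzero:
  assumes "i \<noteq> j"
  shows "casoratian j * cfib_shift j (int i) \<noteq> 0"
proof (cases "j < i")
  case True
  then show ?thesis by (simp add: casoratian_nonzero cfib_shift_nonzero)
next
  case False
  with assms have "i < j" by simp
  then show ?thesis by (simp add: casoratian_cross_antisym[of j i] casoratian_nonzero cfib_shift_nonzero)
qed

lemma fibonomial_term_eq:
  assumes "j \<le> k + 1"
  shows "(-1) ^ ((j + 1) choose 2) * s ^ (j choose 2) * q ^ (j * (j - 1) * (2 * j - 1) div 6)
      * fibonomial (k + 1) j x s q * cfib (n - int j) x (q ^ j * s) q ^ k
    = (\<Prod>i=1..k + 1. cfib (int i) x s q) / s
      * ((casoratian j * cfib_shift j n) ^ k / (\<Prod>i\<in>{..k + 1} - {j}. casoratian j * cfib_shift j (int i)))"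
proof -
  define T where "T = (-1) ^ ((j + 1) choose 2) * s ^ (j choose 2) * q ^ (j * (j - 1) * (2 * j - 1) div 6)"
  define A where "A = (-1) ^ j * (\<Prod>i<j. casoratian i) * casoratian j ^ (k + 1 - j)"
  define D where "D = (\<Prod>t=1..j. cfib (int t) x (q ^ (j - t) * s) q) * (\<Prod>t=1..k + 1 - j. cfib (int t) x (q ^ j * s) q)"
  have split: "{..k + 1} - {j} = {..<j} \<union> {Suc j..k + 1}" using assms by auto
  have "(\<Prod>i\<in>{..k + 1} - {j}. casoratian j * cfib_shift j (int i))
      = (\<Prod>i<j. casoratian j * cfib_shift j (int i)) * (\<Prod>i\<in>{Suc j..k + 1}. casoratian j * cfib_shift j (int i))"
    unfolding split by (rule prod.union_disjoint) auto
  then have prod_eq: "(\<Prod>i\<in>{..k + 1} - {j}. casoratian j * cfib_shift j (int i)) = A * D"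
    unfolding prod_casoratian_cross_below prod_casoratian_cross_above A_def D_def by (simp only: mult_ac)
  have "cfib (int t) x (q ^ i * s) q \<noteq> 0" if "1 \<le> t" for i t
    using cfib_nonzero[OF that] by (simp add: cfib_def)
  then have "D \<noteq> 0" unfolding D_def by (simp add: prod_zero_iff)
  moreover have "A \<noteq> 0" unfolding A_def by (simp add: casoratian_nonzero prod_zero_iff)
  moreover have TA: "T * A * s = casoratian j ^ k"
  proof -
    have "T * A * s * casoratian j = ((-1) ^ (((j + 1) choose 2) + j) * s ^ (j choose 2)
        * q ^ (j * (j - 1) * (2 * j - 1) div 6) * (\<Prod>i<j. casoratian i) * s * casoratian j) * casoratian j ^ (k + 1 - j)"
      unfolding T_def A_def by (simp add: power_add mult_ac)
    also have "\<dots> = casoratian j ^ j * casoratian j ^ (k + 1 - j)"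
      by (simp only: casoratian_power)
    also have "\<dots> = casoratian j * casoratian j ^ k"
      using assms by (simp add: power_add[symmetric])
    finally show ?thesis using casoratian_nonzero[of j] by (simp add: mult.assoc)
  qed
  moreover have "fibonomial (k + 1) j x s q = (\<Prod>i=1..k + 1. cfib (int i) x s q) / D"
    unfolding fibonomial_def D_def ..
  moreover have "cfib (n - int j) x (q ^ j * s) q = cfib_shift j n"
    unfolding cfib_shift_def ..
  ultimately show ?thesis
    unfolding prod_eq T_def[symmetric] power_mult_distrib TA[symmetric] using s_nonzero
    by (simp add: field_simps)
qed

theorem carlitz_fibonomial_sum_eq_0:
  "(\<Sum>j=0..k+1. (-1) ^ ((j + 1) choose 2) * s ^ (j choose 2)
      * q ^ (j * (j - 1) * (2 * j - 1) div 6)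
      * fibonomial (k + 1) j x s q
      * cfib (n - int j) x (q ^ j * s) q ^ k) = 0"
proof -
  have "(\<Sum>j\<in>{..k + 1}. (casoratian j * cfib_shift j n) ^ k
      / (\<Prod>i\<in>{..k + 1} - {j}. casoratian j * cfib_shift j (int i))) = 0"
    using homogeneous_lagrange_sum_eq_0[of "{..k + 1}" k "\<lambda>j. cfib_shift 1 (int j)"
        "\<lambda>j. cfib_shift 0 (int j)" "cfib_shift 0 n" "cfib_shift 1 n"] casoratian_cross_nonzero
    by (simp add: casoratian_mult_cfib_shift)
  moreover have "(\<Sum>j=0..k+1. (-1) ^ ((j + 1) choose 2) * s ^ (j choose 2)
      * q ^ (j * (j - 1) * (2 * j - 1) div 6) * fibonomial (k + 1) j x s q
      * cfib (n - int j) x (q ^ j * s) q ^ k)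
    = (\<Prod>i=1..k + 1. cfib (int i) x s q) / s * (\<Sum>j\<in>{..k + 1}. (casoratian j * cfib_shift j n) ^ k
      / (\<Prod>i\<in>{..k + 1} - {j}. casoratian j * cfib_shift j (int i)))"
    unfolding atLeast0AtMost sum_distrib_left by (intro sum.cong refl fibonomial_term_eq) simp
  ultimately show ?thesis by simp
qed

end

end

fun cfib_ring :: "'a::comm_ring_1 \<Rightarrow> 'a \<Rightarrow> 'a \<Rightarrow> nat \<Rightarrow> 'a" where
  "cfib_ring x s q 0 = 0"
| "cfib_ring x s q (Suc 0) = 1"
| "cfib_ring x s q (Suc (Suc m)) = x * cfib_ring x s q (Suc m) + q ^ m * s * cfib_ring x s q m"

lemma cfib_nat_eq_cfib_ring: "cfib_nat x s q t = cfib_ring x s q t"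
  by (induction x s q t rule: cfib_ring.induct) simp_all

lemma cfib_ring_hom:
  fixes h :: "'a::comm_ring_1 \<Rightarrow> 'b::comm_ring_1"
  assumes add: "\<And>a b. h (a + b) = h a + h b" and mult: "\<And>a b. h (a * b) = h a * h b"
    and "h 0 = 0" and one: "h 1 = 1"
  shows "h (cfib_ring x s q t) = cfib_ring (h x) (h s) (h q) t"
proof -
  have power: "h (a ^ m) = h a ^ m" for a m by (induction m) (simp_all add: one mult)
  show ?thesis by (induction x s q t rule: cfib_ring.induct) (simp_all add: assms power)
qed

lemma cfib_ring_1_1_1_ge: "(if t = 0 then 0 else 1) \<le> cfib_ring (1::int) 1 1 t"
  by (induction "1::int" "1::int" "1::int" t rule: cfib_ring.induct) (auto split: if_splits)

lemma Sv_nonzero: "Sv \<noteq> 0"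
  by (simp add: Sv_def Zero_fract_def eq_fract)

lemma Qv_nonzero: "Qv \<noteq> 0"
  by (simp add: Qv_def Zero_fract_def eq_fract)

lemma Fract_power: "Fract (a ^ m) 1 = Fract (a::'a::idom) 1 ^ m"
proof (induction m)
  case (Suc m)
  have "Fract (a ^ Suc m) 1 = Fract a 1 * Fract (a ^ m) 1" by simp
  then show ?case using Suc by simp
qed (simp add: One_fract_def)

text \<open>The polynomial \<open>f(t, x, q\<^sup>i s)\<close> is nonzero because its value at \<open>x = s = q = 1\<close> is the
  Fibonacci number \<open>F\<^sub>t \<ge> 1\<close>.\<close>
lemma cfib_nat_ratfun_nonzero:
  assumes "1 \<le> t"
  shows "cfib_nat Xv (Qv ^ i * Sv) Qv t \<noteq> 0"
proof -
  define X :: "int poly poly poly" where "X = [:[:[:0, 1:]:]:]"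
  define S :: "int poly poly poly" where "S = [:[:0, 1:]:]"
  define Q :: "int poly poly poly" where "Q = [:0, 1:]"
  define p where "p = cfib_ring X (Q ^ i * S) Q t"
  define ev :: "int poly poly poly \<Rightarrow> int" where "ev r = poly (poly (poly r [:[:1:]:]) [:1:]) 1" for r
  have "ev p = cfib_ring (ev X) (ev (Q ^ i * S)) (ev Q) t"
    unfolding p_def by (rule cfib_ring_hom) (simp_all add: ev_def)
  also have "\<dots> = cfib_ring 1 1 1 t"
    by (simp add: ev_def X_def S_def Q_def)
  finally have "p \<noteq> 0"
    using cfib_ring_1_1_1_ge[of t] assms by (auto simp: ev_def)
  have "Fract p 1 = cfib_ring (Fract X 1) (Fract Q 1 ^ i * Fract S 1) (Fract Q 1) t"
  proof -
    have "Fract (Q ^ i * S) 1 = Fract Q 1 ^ i * Fract S 1" by (simp add: Fract_power[symmetric])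
    then show ?thesis unfolding p_def
      by (subst cfib_ring_hom[where h = "\<lambda>r. Fract r 1"]) (simp_all add: Zero_fract_def One_fract_def)
  qed
  also have "\<dots> = cfib_nat Xv (Qv ^ i * Sv) Qv t"
    by (simp add: cfib_nat_eq_cfib_ring Xv_def Sv_def Qv_def X_def S_def Q_def)
  finally show ?thesis
    using \<open>p \<noteq> 0\<close> by (auto simp: Zero_fract_def eq_fract)
qed

theorem theorem1:
  fixes k :: nat and n :: int
  assumes "1 \<le> k"
  shows "(\<Sum>j=0..k+1. (-1) ^ ((j + 1) choose 2) * Sv ^ (j choose 2)
            * Qv ^ (j * (j - 1) * (2 * j - 1) div 6)
            * fibonomial (k + 1) j Xv Sv Qv
            * cfib (n - int j) Xv (Qv ^ j * Sv) Qv ^ k) = 0"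
  by (rule carlitz_fibonomial_sum_eq_0[OF Sv_nonzero Qv_nonzero cfib_nat_ratfun_nonzero])

end
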